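(* Let $(M,\rho)$ be a complete metric space, let $f:M\to\mathbb{R}\cup\{+\infty\}$ be proper, lower semicontinuous and bounded below, and let $g:M\to\mathbb{R}$ be continuous with $$|\nabla f|(x)>|\nabla g|(x)\qquad\text{for all }x\in\operatorname{dom} f\setminus 0\operatorname{crit} f.$$ Then for every $\varepsilon>0$ and every $x_0\in\operatorname{dom} f$ there exists $x\in\varepsilon\operatorname{crit} f$ such that $$f(x)\le f(x_0)-\varepsilon\rho(x,x_0)\quad\text{and}\quad f(x_0)-g(x_0)\ge f(x)-g(x).$$ In particular, $f(y)-g(y)\ge\inf_{\varepsilon\operatorname{crit} f}(f-g)$ for all $y\in\operatorname{dom} f$ and all $\varepsilon>0$.
   Context: $\operatorname{dom} f:=\{x:f(x)<+\infty\}$. $[t]^+:=\max\{0,t\}$ (with $[f(x)-f(y)]^+:=0$ if $f(y)=+\infty$). For $x\in\operatorname{dom} f$, the local slope is $|\nabla f|(x):=\limsup_{y\to x,\,y\neq x}\frac{[f(x)-f(y)]^+}{\rho(x,y)}\in[0,+\infty]$ (equal to $0$ at isolated points). For $\varepsilon\ge0$, $\varepsilon\operatorname{crit} f:=\{x\in\operatorname{dom} f:\ |\nabla f|(x)\le\varepsilon\}$. *)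

theory Defs
  imports "HOL-Analysis.Analysis"
begin

text \<open>Extended-real-valued functions f :: 'a \<Rightarrow> ereal model f : M \<rightarrow> \<real> \<union> {+\<infinity>}.\<close>

definition edom :: "('a \<Rightarrow> ereal) \<Rightarrow> 'a set" where
  "edom f = {x. f x < \<infinity>}"

definition lsc :: "('a::topological_space \<Rightarrow> ereal) \<Rightarrow> bool" where
  "lsc f \<longleftrightarrow> (\<forall>x. f x \<le> Liminf (at x) f)"

text \<open>Local slope: limsup_{y \<rightarrow> x, y \<noteq> x} [f x - f y]^+ / dist x y, taken to be 0 at
  isolated points (the outer max with 0 only matters there, where the Limsup over the
  trivial filter is -\<infinity>). If f y = \<infinity> then f x - f y = -\<infinity> and the positive part is 0.\<close>
definition slope :: "('a::metric_space \<Rightarrow> ereal) \<Rightarrow> 'a \<Rightarrow> ereal" where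
  "slope f x = max 0 (Limsup (at x) (\<lambda>y. max 0 (f x - f y) / ereal (dist x y)))"

definition ecrit :: "real \<Rightarrow> ('a::metric_space \<Rightarrow> ereal) \<Rightarrow> 'a set" where
  "ecrit \<epsilon> f = {x \<in> edom f. slope f x \<le> ereal \<epsilon>}"

end

theory Submission
  imports Defs
begin

text \<open>On the closed set \<open>D = {y. f y - g y \<le> f x\<^sub>0 - g x\<^sub>0}\<close>
  Ekeland's variational principle yields a point \<open>x\<close> with \<open>f x \<le> f x\<^sub>0 - \<epsilon> \<rho>(x, x\<^sub>0)\<close> that
  strictly minimises \<open>f + \<epsilon> \<rho>(x, \<cdot>)\<close> on \<open>D\<close>. If the slope of \<open>f\<close> at \<open>x\<close> exceeded \<open>\<epsilon>\<close>, it
  would also exceed the slope of \<open>g\<close>, so near \<open>x\<close> there would be points where \<open>f\<close> drops by more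
  than \<open>c \<rho>\<close> while \<open>g\<close> drops by less, for some \<open>c > \<epsilon>\<close>; such points lie in \<open>D\<close> and contradict
  the strict minimality.\<close>

definition ekeland_set :: "('a::metric_space \<Rightarrow> real) \<Rightarrow> real \<Rightarrow> 'a set \<Rightarrow> 'a \<Rightarrow> 'a set" where
  "ekeland_set F e D z = {y \<in> D. F y + e * dist y z \<le> F z}"

lemma ekeland_set_self: "z \<in> D \<Longrightarrow> z \<in> ekeland_set F e D z"
  by (simp add: ekeland_set_def)

lemma ekeland_set_subset: "ekeland_set F e D z \<subseteq> D"
  by (auto simp: ekeland_set_def)

lemma ekeland_set_trans:
  assumes "0 \<le> e" and "y \<in> ekeland_set F e D z"
  shows "ekeland_set F e D y \<subseteq> ekeland_set F e D z"
proof
  fix w assume "w \<in> ekeland_set F e D y"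
  moreover have "e * dist w z \<le> e * dist w y + e * dist y z"
    using mult_left_mono[OF dist_triangle[of w z y] \<open>0 \<le> e\<close>] by (simp add: distrib_left)
  ultimately show "w \<in> ekeland_set F e D z"
    using assms(2) by (simp add: ekeland_set_def)
qed

lemma ekeland_set_near_inf:
  assumes "z \<in> D" and "0 < \<delta>"
  obtains y where "y \<in> ekeland_set F e D z" "F y < Inf (F ` ekeland_set F e D z) + \<delta>"
proof -
  have "F ` ekeland_set F e D z \<noteq> {}"
    using ekeland_set_self[OF \<open>z \<in> D\<close>] by blast
  from cInf_lessD[OF this, of "Inf (F ` ekeland_set F e D z) + \<delta>"] \<open>0 < \<delta>\<close>
  show thesis using that by auto
qed

lemma ekeland_set_small:
  assumes bdd: "bdd_below (F ` D)" and e: "0 \<le> e"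
    and y: "y \<in> ekeland_set F e D z" "F y < Inf (F ` ekeland_set F e D z) + \<delta>"
    and w: "w \<in> ekeland_set F e D y"
  shows "e * dist w y \<le> \<delta>"
proof -
  have "w \<in> ekeland_set F e D z"
    using ekeland_set_trans[OF e y(1)] w by blast
  then have "Inf (F ` ekeland_set F e D z) \<le> F w"
    using bdd_below_mono[OF bdd image_mono[OF ekeland_set_subset]] by (auto intro: cInf_lower)
  moreover have "F w + e * dist w y \<le> F y"
    using w by (simp add: ekeland_set_def)
  ultimately show ?thesis using y(2) by linarith
qed

lemma ekeland_sequence:
  assumes bdd: "bdd_below (F ` D)" and x0: "x0 \<in> D"
  obtains xs where "xs 0 = x0"
    and "\<And>n. xs (Suc n) \<in> ekeland_set F e D (xs n)"
    and "\<And>n. F (xs (Suc n)) < Inf (F ` ekeland_set F e D (xs n)) + 1 / 2 ^ n"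
proof -
  have "\<exists>xs. \<forall>n. (xs n \<in> D \<and> (n = 0 \<longrightarrow> xs n = x0)) \<and>
      xs (Suc n) \<in> ekeland_set F e D (xs n) \<and>
      F (xs (Suc n)) < Inf (F ` ekeland_set F e D (xs n)) + 1 / 2 ^ n"
  proof (rule dependent_nat_choice)
    fix z and n :: nat assume "z \<in> D \<and> (n = 0 \<longrightarrow> z = x0)"
    then obtain y where "y \<in> ekeland_set F e D z" "F y < Inf (F ` ekeland_set F e D z) + 1 / 2 ^ n"
      using ekeland_set_near_inf[of z D "1 / 2 ^ n"] by auto
    then show "\<exists>y. (y \<in> D \<and> (Suc n = 0 \<longrightarrow> y = x0)) \<and>
        y \<in> ekeland_set F e D z \<and> F y < Inf (F ` ekeland_set F e D z) + 1 / 2 ^ n"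
      using ekeland_set_subset by blast
  qed (use x0 in auto)
  then show thesis using that by blast
qed

lemma ekeland_sequence_small:
  assumes bdd: "bdd_below (F ` D)" and e: "0 < e"
    and xs_in: "\<And>n. xs (Suc n) \<in> ekeland_set F e D (xs n)"
    and xs_inf: "\<And>n. F (xs (Suc n)) < Inf (F ` ekeland_set F e D (xs n)) + 1 / 2 ^ n"
    and "0 < r"
  shows "\<exists>n. \<forall>v\<in>ekeland_set F e D (xs n). \<forall>w\<in>ekeland_set F e D (xs n). dist v w < r"
proof -
  obtain n :: nat where n: "(1/2) ^ n < r * e / 2"
    using real_arch_pow_inv[of "r * e / 2" "1/2"] \<open>0 < r\<close> e by auto
  have "dist v w < r"
    if "v \<in> ekeland_set F e D (xs (Suc n))" "w \<in> ekeland_set F e D (xs (Suc n))" for v w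
  proof -
    have "e * dist v (xs (Suc n)) \<le> 1 / 2 ^ n" "e * dist w (xs (Suc n)) \<le> 1 / 2 ^ n"
      using ekeland_set_small[OF bdd less_imp_le[OF e] xs_in xs_inf] that by auto
    then have "e * (dist v (xs (Suc n)) + dist w (xs (Suc n))) < e * r"
      using n by (simp add: power_one_over algebra_simps)
    then show ?thesis
      using e dist_triangle2[of v w "xs (Suc n)"] by simp
  qed
  then show ?thesis by blast
qed

theorem ekeland_variational_principle:
  fixes F :: "'a::complete_space \<Rightarrow> real"
  assumes closed: "\<And>z. z \<in> D \<Longrightarrow> closed (ekeland_set F e D z)"
    and bdd: "bdd_below (F ` D)" and e: "0 < e" and x0: "x0 \<in> D"
  obtains x where "x \<in> D" "F x + e * dist x x0 \<le> F x0"
    and "\<And>y. y \<in> D \<Longrightarrow> y \<noteq> x \<Longrightarrow> F x < F y + e * dist x y"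
proof -
  let ?S = "ekeland_set F e D"
  obtain xs where xs0: "xs 0 = x0" and xs_in: "\<And>n. xs (Suc n) \<in> ?S (xs n)"
    and xs_inf: "\<And>n. F (xs (Suc n)) < Inf (F ` ?S (xs n)) + 1 / 2 ^ n"
    using ekeland_sequence[OF bdd x0] by blast
  have xs_D: "xs n \<in> D" for n
    by (cases n) (use x0 xs0 subsetD[OF ekeland_set_subset xs_in] in auto)
  have "decseq (\<lambda>n. ?S (xs n))"
    using ekeland_set_trans[OF less_imp_le[OF e] xs_in] by (intro decseq_SucI) blast
  then have nested: "?S (xs n) \<subseteq> ?S (xs m)" if "m \<le> n" for m n
    using that by (simp add: decseq_def)
  obtain a where a: "(\<Inter>n. ?S (xs n)) = {a}"
    using decreasing_closed_nest_sing[of "\<lambda>n. ?S (xs n)"] closed[OF xs_D]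
      ekeland_set_self[OF xs_D] nested ekeland_sequence_small[OF bdd e xs_in xs_inf] by blast
  then have a_S: "a \<in> ?S (xs n)" for n by auto
  show thesis
  proof
    show "a \<in> D" "F a + e * dist a x0 \<le> F x0"
      using a_S[of 0] xs0 by (simp_all add: ekeland_set_def)
  next
    fix y assume "y \<in> D" "y \<noteq> a"
    show "F a < F y + e * dist a y"
    proof (rule ccontr)
      assume "\<not> ?thesis"
      then have "y \<in> ?S a" using \<open>y \<in> D\<close> by (simp add: ekeland_set_def dist_commute)
      then have "y \<in> ?S (xs n)" for n
        using ekeland_set_trans[OF less_imp_le[OF e] a_S] by blast
      then show False using a \<open>y \<noteq> a\<close> by auto
    qed
  qed
qed

lemma closed_lsc_le_continuous:
  fixes f :: "'a::topological_space \<Rightarrow> ereal" and h :: "'a \<Rightarrow> real"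
  assumes "lsc f" and "continuous_on UNIV h"
  shows "closed {y. f y \<le> ereal (h y)}"
proof -
  have near: "\<forall>\<^sub>F z in at y. \<not> f z \<le> ereal (h z)" if gt: "ereal (h y) < f y" for y
  proof -
    obtain r where r: "ereal (h y) < ereal r" "ereal r < f y"
      using ereal_dense2[OF gt] by blast
    have "ereal r < Liminf (at y) f"
      using r(2) assms(1) order_less_le_trans unfolding lsc_def by blast
    then have "\<forall>\<^sub>F z in at y. ereal r < f z" by (rule less_LiminfD)
    moreover have "\<forall>\<^sub>F z in at y. h z < r"
      using assms(2) r(1) by (intro order_tendstoD(2)) (auto simp: continuous_on_def)
    ultimately show ?thesis
      by eventually_elim (use less_imp_le less_le_trans in fastforce)
  qed
  have "open {y. \<not> f y \<le> ereal (h y)}"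
  proof (subst open_subopen, intro ballI)
    fix y assume y: "y \<in> {y. \<not> f y \<le> ereal (h y)}"
    then obtain S where "open S" "y \<in> S" "\<forall>z\<in>S. z \<noteq> y \<longrightarrow> \<not> f z \<le> ereal (h z)"
      using near[of y] by (auto simp: not_le eventually_at_topological)
    then show "\<exists>T. open T \<and> y \<in> T \<and> T \<subseteq> {y. \<not> f y \<le> ereal (h y)}"
      using y by (intro exI[of _ S]) auto
  qed
  then show ?thesis by (simp add: closed_def Compl_eq)
qed

lemma slope_lessD:
  fixes g :: "'a::metric_space \<Rightarrow> real"
  assumes "slope (\<lambda>y. ereal (g y)) x < ereal c"
  shows "\<forall>\<^sub>F y in at x. g x - g y < c * dist x y"
proof -
  have "Limsup (at x) (\<lambda>y. max 0 (ereal (g x) - ereal (g y)) / ereal (dist x y)) < ereal c"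
    using assms by (simp add: slope_def)
  then have "\<forall>\<^sub>F y in at x. max 0 (ereal (g x) - ereal (g y)) / ereal (dist x y) < ereal c"
    by (rule Limsup_lessD)
  moreover have "\<forall>\<^sub>F y in at x. y \<noteq> x"
    by (simp add: eventually_at_filter)
  ultimately show ?thesis
  proof eventually_elim
    case (elim y)
    then have d: "0 < dist x y" by simp
    then have "max 0 (g x - g y) / dist x y < c"
      using elim(1) by (simp add: max_def split: if_splits)
    then show ?case using d by (simp add: divide_less_eq)
  qed
qed

lemma less_slopeD:
  fixes f :: "'a::metric_space \<Rightarrow> ereal"
  assumes "0 \<le> c" and "ereal c < slope f x"
  shows "\<exists>\<^sub>F y in at x. ereal (c * dist x y) < f x - f y"
proof (rule ccontr)
  assume "\<not> ?thesis"
  then have "\<forall>\<^sub>F y in at x. f x - f y \<le> ereal (c * dist x y)"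
    by (simp add: not_frequently not_less)
  moreover have "\<forall>\<^sub>F y in at x. y \<noteq> x"
    by (simp add: eventually_at_filter)
  ultimately have "\<forall>\<^sub>F y in at x. max 0 (f x - f y) / ereal (dist x y) \<le> ereal c"
  proof eventually_elim
    case (elim y)
    then have d: "0 < dist x y" by simp
    have "max 0 (f x - f y) \<le> ereal (dist x y) * ereal c"
      using elim \<open>0 \<le> c\<close> by (simp add: max_def mult.commute)
    then show ?case
      using d by (simp add: ereal_divide_le_pos del: times_ereal.simps)
  qed
  then have "Limsup (at x) (\<lambda>y. max 0 (f x - f y) / ereal (dist x y)) \<le> ereal c"
    by (rule Limsup_bounded)
  then show False
    using assms by (simp add: slope_def less_max_iff_disj)
qed

lemma slope_le_at_strict_minimizer:
  fixes f :: "'a::metric_space \<Rightarrow> ereal" and g :: "'a \<Rightarrow> real"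
  assumes fx: "f x = ereal a" and proper: "\<forall>y. f y \<noteq> -\<infinity>" and e: "0 \<le> \<epsilon>"
    and min: "\<And>y. y \<noteq> x \<Longrightarrow> f y - ereal (g y) \<le> f x - ereal (g x) \<Longrightarrow>
                  f x < f y + ereal (\<epsilon> * dist x y)"
    and slope_gt: "0 < slope f x \<Longrightarrow> slope (\<lambda>y. ereal (g y)) x < slope f x"
  shows "slope f x \<le> ereal \<epsilon>"
proof (rule ccontr)
  assume "\<not> ?thesis"
  then have gt: "ereal \<epsilon> < slope f x" by simp
  with e slope_gt have "slope (\<lambda>y. ereal (g y)) x < slope f x"
    by (metis ereal_less_eq(5) order_le_less_trans)
  with gt obtain c where c: "max (ereal \<epsilon>) (slope (\<lambda>y. ereal (g y)) x) < ereal c" "ereal c < slope f x"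
    using ereal_dense2[of "max (ereal \<epsilon>) (slope (\<lambda>y. ereal (g y)) x)"] by auto
  then have "\<epsilon> < c" "0 \<le> c"
    using e by auto
  have "\<exists>\<^sub>F y in at x. ereal (c * dist x y) < f x - f y \<and> g x - g y < c * dist x y \<and> y \<noteq> x"
    using less_slopeD[OF \<open>0 \<le> c\<close> c(2)] slope_lessD[of g x c] c(1)
    by (intro frequently_eventually_frequently) (auto simp: eventually_conj_iff eventually_at_filter)
  then obtain y where drop_f: "ereal (c * dist x y) < f x - f y"
    and drop_g: "g x - g y < c * dist x y" and "y \<noteq> x"
    by (rule frequentlyE) blast
  then have d: "0 < dist x y" by simp
  obtain b where fy: "f y = ereal b"
    using drop_f fx proper by (cases "f y") auto
  have "c * dist x y < a - b"
    using drop_f fx fy by simp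
  moreover have "\<epsilon> * dist x y \<le> c * dist x y"
    using \<open>\<epsilon> < c\<close> by (simp add: mult_right_mono)
  ultimately have "f y - ereal (g y) \<le> f x - ereal (g x)" and "f y + ereal (\<epsilon> * dist x y) \<le> f x"
    using drop_g fx fy by auto
  then show False
    using min[OF \<open>y \<noteq> x\<close>] by (simp add: not_less[symmetric])
qed

lemma exists_ecrit_descent_point:
  fixes f :: "'a::complete_space \<Rightarrow> ereal" and g :: "'a \<Rightarrow> real"
  assumes proper: "\<forall>x. f x \<noteq> -\<infinity>" and lsc_f: "lsc f"
    and bdd: "\<exists>m::real. \<forall>x. ereal m \<le> f x" and cont_g: "continuous_on UNIV g"
    and slope_gt: "\<forall>x \<in> edom f - ecrit 0 f. slope f x > slope (\<lambda>y. ereal (g y)) x"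
    and eps: "0 < \<epsilon>" and x0: "x0 \<in> edom f"
  obtains x where "x \<in> ecrit \<epsilon> f" "f x \<le> f x0 - ereal (\<epsilon> * dist x x0)"
    "f x - ereal (g x) \<le> f x0 - ereal (g x0)"
proof -
  obtain m :: real where m: "\<And>x. ereal m \<le> f x" using bdd by blast
  define F where "F y = real_of_ereal (f y)" for y
  have F: "f y = ereal (F y)" if "y \<in> edom f" for y
    using that proper unfolding F_def edom_def by (cases "f y") auto
  define D where "D = {y. f y \<le> ereal (F x0 - g x0 + g y)}"
  have D_edom: "D \<subseteq> edom f"
    by (auto simp: D_def edom_def)
  have D_iff: "y \<in> D \<longleftrightarrow> y \<in> edom f \<and> F y - g y \<le> F x0 - g x0" for y
    using F D_edom by (force simp: D_def)
  have closed: "closed (ekeland_set F \<epsilon> D z)" for z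
  proof -
    have "ekeland_set F \<epsilon> D z = D \<inter> {y. f y \<le> ereal (F z - \<epsilon> * dist y z)}"
      using F D_edom by (force simp: ekeland_set_def)
    moreover have "closed D" unfolding D_def
      by (rule closed_lsc_le_continuous[OF lsc_f]) (intro continuous_intros cont_g)
    moreover have "closed {y. f y \<le> ereal (F z - \<epsilon> * dist y z)}"
      by (rule closed_lsc_le_continuous[OF lsc_f]) (intro continuous_intros)
    ultimately show ?thesis by auto
  qed
  have "m \<le> F y" if "y \<in> D" for y
    using m[of y] F[of y] D_edom that by auto
  then have "bdd_below (F ` D)"
    by (rule bdd_belowI2)
  moreover have "x0 \<in> D"
    using x0 by (simp add: D_iff)
  ultimately obtain x where "x \<in> D" and descent: "F x + \<epsilon> * dist x x0 \<le> F x0"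
    and strict: "\<And>y. y \<in> D \<Longrightarrow> y \<noteq> x \<Longrightarrow> F x < F y + \<epsilon> * dist x y"
    using ekeland_variational_principle[OF closed _ eps] by blast
  have x: "x \<in> edom f" "F x - g x \<le> F x0 - g x0"
    using \<open>x \<in> D\<close> by (simp_all add: D_iff)
  have "slope f x \<le> ereal \<epsilon>"
  proof (rule slope_le_at_strict_minimizer[OF F[OF x(1)] proper less_imp_le[OF eps]])
    fix y assume "y \<noteq> x" and le: "f y - ereal (g y) \<le> f x - ereal (g x)"
    then have "y \<in> edom f"
      using F[OF x(1)] by (auto simp: edom_def)
    with le x have "y \<in> D"
      using F[OF x(1)] F[of y] by (simp add: D_iff)
    then show "f x < f y + ereal (\<epsilon> * dist x y)"
      using strict \<open>y \<noteq> x\<close> F \<open>y \<in> edom f\<close> x(1) by simp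
  next
    assume "0 < slope f x"
    then show "slope (\<lambda>y. ereal (g y)) x < slope f x"
      using slope_gt x(1) by (auto simp: ecrit_def zero_ereal_def not_le)
  qed
  then show thesis
    using that[of x] x descent F[OF x(1)] F[OF x0] by (simp add: ecrit_def)
qed

theorem proposition3p4:
  fixes f :: "'a::complete_space \<Rightarrow> ereal" and g :: "'a \<Rightarrow> real"
  assumes proper: "edom f \<noteq> {}" "\<forall>x. f x \<noteq> -\<infinity>"
    and lsc_f: "lsc f"
    and bdd: "\<exists>m::real. \<forall>x. ereal m \<le> f x"
    and cont_g: "continuous_on UNIV g"
    and slope_gt: "\<forall>x \<in> edom f - ecrit 0 f. slope f x > slope (\<lambda>y. ereal (g y)) x"
  shows "(\<forall>\<epsilon>>0. \<forall>x0 \<in> edom f. \<exists>x \<in> ecrit \<epsilon> f.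
            f x \<le> f x0 - ereal (\<epsilon> * dist x x0) \<and>
            f x0 - ereal (g x0) \<ge> f x - ereal (g x))
       \<and> (\<forall>y \<in> edom f. \<forall>\<epsilon>>0. f y - ereal (g y) \<ge> (INF x \<in> ecrit \<epsilon> f. f x - ereal (g x)))"
proof (intro conjI allI impI ballI)
  fix \<epsilon> :: real and x0 assume "0 < \<epsilon>" "x0 \<in> edom f"
  then show "\<exists>x \<in> ecrit \<epsilon> f. f x \<le> f x0 - ereal (\<epsilon> * dist x x0) \<and>
      f x0 - ereal (g x0) \<ge> f x - ereal (g x)"
    using exists_ecrit_descent_point[OF proper(2) lsc_f bdd cont_g slope_gt] by blast
next
  fix y and \<epsilon> :: real assume "y \<in> edom f" "0 < \<epsilon>"
  then obtain x where "x \<in> ecrit \<epsilon> f" "f x - ereal (g x) \<le> f y - ereal (g y)"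
    using exists_ecrit_descent_point[OF proper(2) lsc_f bdd cont_g slope_gt] by blast
  then show "(INF x \<in> ecrit \<epsilon> f. f x - ereal (g x)) \<le> f y - ereal (g y)"
    by (rule INF_lower2)
qed

end
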